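(* For all $0\le\lambda<1$ and $0\le d<1$ there is a number $g(\lambda,d)<1$, depending only on $\lambda$ and $d$, with the following property. Let $H$ be a finite-dimensional complex Hilbert space, $U:H\to H$ unitary and $A:H\to H$ Hermitian such that $1$ is an eigenvalue of $A$ and every other eigenvalue $\mu$ of $A$ satisfies $|\mu|\le\lambda$. Let $A_{\max}$ be the eigenspace of $A$ for the eigenvalue $1$ and $P_{\max}$ the orthogonal projection onto $A_{\max}$, and assume $\|P_{\max}Uv\|\le d\|v\|$ for all $v\in A_{\max}$. Then $\|(UA)^2v\|\le g(\lambda,d)\|v\|$ for all $v\in H$, and hence $\|(UA)^k\|_{op}\le g(\lambda,d)^{\lfloor k/2\rfloor}$ for all $k\ge0$.
   Context: $\|\cdot\|_{op}$ is the operator norm. *)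

theory Defs
  imports Complex_Main "Jordan_Normal_Form.Jordan_Normal_Form" "Jordan_Normal_Form.Schur_Decomposition"
begin

text \<open>The finite-dimensional complex Hilbert space H is modelled as C^n (column vectors of
  dimension n), operators on H as complex n x n matrices.\<close>

definition vnorm :: "complex vec \<Rightarrow> real" where
  "vnorm v = sqrt (\<Sum>i<dim_vec v. (cmod (v $ i))^2)"

definition unitary_mat :: "complex mat \<Rightarrow> bool" where
  "unitary_mat U \<longleftrightarrow> U \<in> carrier_mat (dim_row U) (dim_row U) \<and>
     mat_adjoint U * U = 1\<^sub>m (dim_row U) \<and> U * mat_adjoint U = 1\<^sub>m (dim_row U)"

definition hermitian_mat :: "complex mat \<Rightarrow> bool" where
  "hermitian_mat A \<longleftrightarrow> A \<in> carrier_mat (dim_row A) (dim_row A) \<and> mat_adjoint A = A"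

definition eigenspace :: "complex mat \<Rightarrow> complex \<Rightarrow> complex vec set" where
  "eigenspace A \<mu> = {v \<in> carrier_vec (dim_row A). A *\<^sub>v v = \<mu> \<cdot>\<^sub>v v}"

definition orth_proj :: "complex vec set \<Rightarrow> complex vec \<Rightarrow> complex vec" where
  "orth_proj S v = (THE p. p \<in> S \<and> (\<forall>w\<in>S. (v - p) \<bullet>c w = 0))"

definition opnorm :: "complex mat \<Rightarrow> real" where
  "opnorm M = Sup {vnorm (M *\<^sub>v v) | v. v \<in> carrier_vec (dim_col M) \<and> vnorm v \<le> 1}"

end

theory Submission
  imports Defs "Jordan_Normal_Form.Spectral_Radius" "HOL-Analysis.L2_Norm"
begin

text \<open>
  Diagonalise \<open>A\<close> by a unitary matrix and let \<open>P\<close> be the orthogonal projection onto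
  \<open>A_max\<close>. For a vector \<open>x\<close> put \<open>a = |P x|\<close> and \<open>b = |x - P x|\<close>. Since \<open>A\<close> fixes \<open>P x\<close>
  and shrinks \<open>x - P x\<close> by the factor \<open>\<lambda>\<close>, we get \<open>|A x|\<^sup>2 \<le> a\<^sup>2 + \<lambda>\<^sup>2 b\<^sup>2 \<le> |x|\<^sup>2\<close>.
  Splitting \<open>A x = P x + (A x - P x)\<close> and applying the hypothesis on \<open>U\<close> to \<open>P x\<close> gives
  \<open>m = |P U A x| \<le> d a + \<lambda> b\<close>, and the first estimate applied to \<open>U A x\<close> gives
  \<open>|(U A)\<^sup>2 x|\<^sup>2 \<le> \<lambda>\<^sup>2 |x|\<^sup>2 + (1 - \<lambda>\<^sup>2) m\<^sup>2\<close>. Depending on whether \<open>b \<le> (1 - d)/2 |x|\<close>,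
  one of the two bounds on \<open>m\<close> yields \<open>m\<^sup>2 \<le> (1 - (1 - \<lambda>\<^sup>2)(1 - d)\<^sup>2/4) |x|\<^sup>2\<close>, hence
  \<open>|(U A)\<^sup>2 x| \<le> g |x|\<close> with \<open>g = 1 - (1 - \<lambda>\<^sup>2)\<^sup>2 (1 - d)\<^sup>2 / 8\<close>. As \<open>U A\<close> is a contraction,
  the bound \<open>g\<^bsup>\<lfloor>k/2\<rfloor>\<^esup>\<close> for \<open>(U A)\<^sup>k\<close> follows.
\<close>

section \<open>Adjoints, inner products and norms\<close>

lemma mat_adjoint_dim [simp]:
  "dim_row (mat_adjoint M) = dim_col M" "dim_col (mat_adjoint M) = dim_row M"
  by (simp_all add: mat_adjoint_def)

lemma mat_adjoint_index [simp]:
  "i < dim_col M \<Longrightarrow> j < dim_row M \<Longrightarrow> mat_adjoint M $$ (i, j) = cnj (M $$ (j, i))"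
  by (simp add: mat_adjoint_def mat_of_rows_def)

lemma mat_adjoint_carrier [simp]: "M \<in> carrier_mat n m \<Longrightarrow> mat_adjoint M \<in> carrier_mat m n"
  using carrier_matD[of M n m] by (intro carrier_matI) simp_all

lemma mat_adjoint_adjoint [simp]: "mat_adjoint (mat_adjoint M) = (M :: complex mat)"
  by (rule eq_matI) simp_all

lemma mat_adjoint_one [simp]: "mat_adjoint (1\<^sub>m n) = (1\<^sub>m n :: complex mat)"
  by (rule eq_matI) simp_all

lemma mat_adjoint_mult:
  assumes "A \<in> carrier_mat n m" "B \<in> carrier_mat m k"
  shows "mat_adjoint (A * B :: complex mat) = mat_adjoint B * mat_adjoint A"
  by (rule eq_matI) (use assms in \<open>auto simp: scalar_prod_def mult.commute\<close>)

lemma mat_adjoint_four_block_diag: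
  assumes "A \<in> carrier_mat n1 m1" "D \<in> carrier_mat n2 m2"
  shows "mat_adjoint (four_block_mat A (0\<^sub>m n1 m2) (0\<^sub>m n2 m1) D :: complex mat)
     = four_block_mat (mat_adjoint A) (0\<^sub>m m1 n2) (0\<^sub>m m2 n1) (mat_adjoint D)"
  by (rule eq_matI) (use assms in auto)

lemma cscalar_prod_eq_sum: "v \<bullet>c w = (\<Sum>i<dim_vec w. v $ i * cnj (w $ i :: complex))"
  by (simp add: scalar_prod_def lessThan_atLeast0)

lemma cscalar_prod_mult_mat_vec:
  assumes "M \<in> carrier_mat n m" "x \<in> carrier_vec m" "y \<in> carrier_vec n"
  shows "(M *\<^sub>v x) \<bullet>c y = x \<bullet>c (mat_adjoint M *\<^sub>v (y :: complex vec))"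
proof -
  have "(M *\<^sub>v x) \<bullet>c y = (\<Sum>i<n. \<Sum>j<m. M $$ (i, j) * x $ j * cnj (y $ i))"
    using assms by (simp add: cscalar_prod_eq_sum scalar_prod_def lessThan_atLeast0 sum_distrib_right)
  also have "\<dots> = (\<Sum>j<m. \<Sum>i<n. x $ j * cnj (cnj (M $$ (i, j)) * y $ i))"
    by (subst sum.swap) (simp add: mult_ac)
  also have "\<dots> = x \<bullet>c (mat_adjoint M *\<^sub>v y)"
    using assms by (simp add: cscalar_prod_eq_sum scalar_prod_def lessThan_atLeast0 sum_distrib_left)
  finally show ?thesis .
qed

lemma cscalar_prod_diff_left:
  "u \<in> carrier_vec n \<Longrightarrow> v \<in> carrier_vec n \<Longrightarrow> w \<in> carrier_vec n \<Longrightarrow>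
    (u - v) \<bullet>c w = u \<bullet>c w - v \<bullet>c (w :: complex vec)"
  by (simp add: cscalar_prod_eq_sum sum_subtractf left_diff_distrib)

lemma cscalar_prod_commute:
  "v \<in> carrier_vec n \<Longrightarrow> w \<in> carrier_vec n \<Longrightarrow> v \<bullet>c w = cnj (w \<bullet>c (v :: complex vec))"
  by (simp add: cscalar_prod_eq_sum mult.commute)

lemma cscalar_prod_unit_vec: "v \<in> carrier_vec n \<Longrightarrow> i < n \<Longrightarrow> v \<bullet>c unit_vec n i = (v $ i :: complex)"
  by (simp add: cscalar_prod_eq_sum unit_vec_def if_distrib cong: if_cong)

lemma vnorm_nonneg [simp]: "0 \<le> vnorm v"
  by (simp add: vnorm_def sum_nonneg)

lemma vnorm_square: "v \<in> carrier_vec n \<Longrightarrow> vnorm v ^ 2 = (\<Sum>i<n. cmod (v $ i) ^ 2)"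
  by (auto simp: vnorm_def sum_nonneg)

lemma cscalar_prod_self: "v \<bullet>c v = of_real (vnorm v ^ 2)"
  by (simp add: vnorm_square[of v "dim_vec v"] cscalar_prod_eq_sum flip: complex_norm_square)

lemma vnorm_le_square_iff: "vnorm v \<le> vnorm w \<longleftrightarrow> vnorm v ^ 2 \<le> vnorm w ^ 2"
  by (simp add: power_mono_iff)

lemma vnorm_add_orthogonal:
  assumes "v \<in> carrier_vec n" "w \<in> carrier_vec n" "w \<bullet>c v = 0"
  shows "vnorm (v + w) ^ 2 = vnorm v ^ 2 + vnorm w ^ 2"
proof -
  have "v \<bullet>c w = 0" using cscalar_prod_commute[OF assms(1,2)] assms(3) by simp
  then have "(v + w) \<bullet>c (v + w) = v \<bullet>c v + w \<bullet>c w"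
    using assms by (simp add: cscalar_prod_eq_sum sum.distrib algebra_simps)
  then show ?thesis unfolding cscalar_prod_self of_real_add[symmetric] of_real_eq_iff .
qed

lemma vnorm_triangle:
  assumes "v \<in> carrier_vec n" "w \<in> carrier_vec n"
  shows "vnorm (v + w) \<le> vnorm v + vnorm (w :: complex vec)"
proof -
  have L2: "vnorm u = L2_set (\<lambda>i. cmod (u $ i)) {..<n}" if "u \<in> carrier_vec n" for u
    using that by (simp add: vnorm_def L2_set_def)
  have "vnorm (v + w) = L2_set (\<lambda>i. cmod (v $ i + w $ i)) {..<n}"
    using assms by (simp add: L2) (intro L2_set_cong; simp)
  also have "\<dots> \<le> L2_set (\<lambda>i. cmod (v $ i) + cmod (w $ i)) {..<n}"
    by (intro L2_set_mono norm_triangle_ineq) simp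
  also have "\<dots> \<le> vnorm v + vnorm w"
    using assms by (simp add: L2 L2_set_triangle_ineq)
  finally show ?thesis .
qed

lemma isometry_cscalar_prod:
  assumes "Q \<in> carrier_mat n m" "mat_adjoint Q * Q = 1\<^sub>m m" "x \<in> carrier_vec m" "y \<in> carrier_vec m"
  shows "(Q *\<^sub>v x) \<bullet>c (Q *\<^sub>v y) = x \<bullet>c (y :: complex vec)"
proof -
  have "mat_adjoint Q *\<^sub>v (Q *\<^sub>v y) = y"
    using assms by (simp flip: assoc_mult_mat_vec[of _ m n])
  then show ?thesis using assms by (simp add: cscalar_prod_mult_mat_vec)
qed

lemma isometry_vnorm:
  assumes "Q \<in> carrier_mat n m" "mat_adjoint Q * Q = 1\<^sub>m m" "x \<in> carrier_vec m"
  shows "vnorm (Q *\<^sub>v x) = vnorm x"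
  using isometry_cscalar_prod[OF assms assms(3)]
  unfolding cscalar_prod_self of_real_eq_iff by (simp add: power2_eq_iff_nonneg)

section \<open>Unitary diagonalisation of Hermitian matrices\<close>

lemma cscalar_prod_smult:
  "x \<in> carrier_vec n \<Longrightarrow> y \<in> carrier_vec n \<Longrightarrow>
    (a \<cdot>\<^sub>v x) \<bullet>c (b \<cdot>\<^sub>v y) = a * cnj b * (x \<bullet>c (y :: complex vec))"
  by (simp add: cscalar_prod_eq_sum sum_distrib_left mult_ac)

lemma mat_adjoint_mult_self_index:
  "W \<in> carrier_mat n m \<Longrightarrow> i < m \<Longrightarrow> j < m \<Longrightarrow>
    (mat_adjoint W * W) $$ (i, j) = col W j \<bullet>c col (W :: complex mat) i"
  by (simp add: scalar_prod_def mult.commute)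

lemma orthonormal_completion:
  assumes v: "v \<in> carrier_vec n" "v \<noteq> 0\<^sub>v n"
  obtains W where "W \<in> carrier_mat n n" "mat_adjoint W * W = 1\<^sub>m n"
    "col W 0 = of_real (1 / vnorm v) \<cdot>\<^sub>v (v :: complex vec)"
proof -
  interpret cof_vec_space n "TYPE(complex)" .
  note bc = basis_completion[OF v]
  define ws where "ws = gram_schmidt n (basis_completion v)"
  note gs = gram_schmidt_result[OF bc(2) bc(4) bc(5) ws_def]
  have len: "length ws = n" and ws: "\<And>i. i < n \<Longrightarrow> ws ! i \<in> carrier_vec n"
    using gs(3,4) bc(6) by auto
  have "0 < n" using v by (cases n) auto
  have "hd ws = v"
    unfolding ws_def basis_completion_def Let_def using v(1) by simp
  then have ws0: "ws ! 0 = v" using len \<open>0 < n\<close> by (cases ws) auto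
  have ws_nz: "vnorm (ws ! i) \<noteq> 0" if "i < n" for i
    using corthogonalD[OF gs(2), of i i] that len ws[OF that] by (simp add: cscalar_prod_self)
  define W where "W = mat_of_cols n (map (\<lambda>w. of_real (1 / vnorm w) \<cdot>\<^sub>v w) ws)"
  have W: "W \<in> carrier_mat n n" unfolding W_def using len mat_of_cols_carrier(1) by fastforce
  have col: "col W i = of_real (1 / vnorm (ws ! i)) \<cdot>\<^sub>v ws ! i" if "i < n" for i
    unfolding W_def using that len ws by simp
  have orthonormal: "col W j \<bullet>c col W i = (if i = j then 1 else 0)" if "i < n" "j < n" for i j
  proof (cases "i = j")
    case True
    then show ?thesis
      using ws_nz[OF that(2)]
      unfolding True col[OF that(2)] cscalar_prod_smult[OF ws[OF that(2)] ws[OF that(2)]]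
      by (simp add: cscalar_prod_self power2_eq_square)
  next
    case False
    then show ?thesis
      using corthogonalD[OF gs(2), of j i] that len by (simp add: col cscalar_prod_smult[OF ws ws])
  qed
  have "mat_adjoint W * W = 1\<^sub>m n"
  proof (rule eq_matI)
    fix i j assume "i < dim_row (1\<^sub>m n :: complex mat)" "j < dim_col (1\<^sub>m n :: complex mat)"
    then show "(mat_adjoint W * W) $$ (i, j) = 1\<^sub>m n $$ (i, j)"
      using mat_adjoint_mult_self_index[OF W] orthonormal by simp
  qed (use W in simp_all)
  moreover have "col W 0 = of_real (1 / vnorm v) \<cdot>\<^sub>v v"
    using col[OF \<open>0 < n\<close>] ws0 by simp
  ultimately show ?thesis using W that by blast
qed

lemma similar_mat_wit_adjoint_conj:
  assumes A: "A \<in> carrier_mat n n" and W: "W \<in> carrier_mat n n" "mat_adjoint W * W = 1\<^sub>m n"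
  shows "similar_mat_wit A (mat_adjoint W * A * W) W (mat_adjoint (W :: complex mat))"
proof -
  have W': "mat_adjoint W \<in> carrier_mat n n" using W by simp
  have WW: "W * mat_adjoint W = 1\<^sub>m n"
    using mat_mult_left_right_inverse[OF W' W(1) W(2)] .
  have "W * (mat_adjoint W * A * W) * mat_adjoint W = (W * mat_adjoint W) * A * (W * mat_adjoint W)"
    using A W W' by (simp only: assoc_mult_mat[of _ n n _ n _ n] mult_carrier_mat)
  then have "A = W * (mat_adjoint W * A * W) * mat_adjoint W"
    using A by (simp add: WW)
  with WW W W' A show ?thesis
    by (intro similar_mat_witI) auto
qed

lemma hermitian_first_column_block:
  fixes B :: "complex mat"
  assumes B: "B \<in> carrier_mat (Suc m) (Suc m)" "mat_adjoint B = B"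
    and col0: "col B 0 = e \<cdot>\<^sub>v unit_vec (Suc m) 0"
  defines "B' \<equiv> mat m m (\<lambda>(i, j). B $$ (Suc i, Suc j))"
  shows "B = four_block_mat (mat 1 1 (\<lambda>_. e)) (0\<^sub>m 1 m) (0\<^sub>m m 1) B'"
    and "mat_adjoint B' = B'"
proof -
  have adj: "B $$ (j, i) = cnj (B $$ (i, j))" if "i < Suc m" "j < Suc m" for i j
    using arg_cong[OF B(2), of "\<lambda>M. M $$ (j, i)"] B(1) that by simp
  have first: "B $$ (i, 0) = (if i = 0 then e else 0)" if "i < Suc m" for i
    using arg_cong[OF col0, of "\<lambda>v. v $ i"] B(1) that by simp
  have row0: "B $$ (0, j) = (if j = 0 then e else 0)" if "j < Suc m" for j
  proof (cases "j = 0")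
    case False
    then show ?thesis using adj[OF that, of 0] first[OF that] by simp
  qed (use first in simp)
  show "B = four_block_mat (mat 1 1 (\<lambda>_. e)) (0\<^sub>m 1 m) (0\<^sub>m m 1) B'"
  proof (rule eq_matI)
    fix i j assume "i < dim_row (four_block_mat (mat 1 1 (\<lambda>_. e)) (0\<^sub>m 1 m) (0\<^sub>m m 1) B')"
      "j < dim_col (four_block_mat (mat 1 1 (\<lambda>_. e)) (0\<^sub>m 1 m) (0\<^sub>m m 1) B')"
    then have ij: "i < Suc m" "j < Suc m" by (simp_all add: B'_def)
    show "B $$ (i, j) = four_block_mat (mat 1 1 (\<lambda>_. e)) (0\<^sub>m 1 m) (0\<^sub>m m 1) B' $$ (i, j)"
      using ij first[OF ij(1)] row0[OF ij(2)] by (cases i; cases j) (auto simp: B'_def)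
  qed (use B in \<open>simp_all add: B'_def\<close>)
  show "mat_adjoint B' = B'"
  proof (rule eq_matI)
    fix i j assume "i < dim_row B'" "j < dim_col B'"
    then show "mat_adjoint B' $$ (i, j) = B' $$ (i, j)"
      using adj[of "Suc j" "Suc i"] by (simp add: B'_def)
  qed (simp_all add: B'_def)
qed

lemma hermitian_deflation:
  fixes A :: "complex mat"
  assumes A: "A \<in> carrier_mat (Suc m) (Suc m)" "mat_adjoint A = A"
  obtains W e A' where "A' \<in> carrier_mat m m" "mat_adjoint A' = A'"
    "similar_mat_wit A (four_block_mat (mat 1 1 (\<lambda>_. e)) (0\<^sub>m 1 m) (0\<^sub>m m 1) A') W (mat_adjoint W)"
proof -
  obtain e where "eigenvalue A e"
    using spectrum_non_empty[OF A(1) zero_less_Suc] by (auto simp: spectrum_def)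
  then obtain v where v: "v \<in> carrier_vec (Suc m)" "v \<noteq> 0\<^sub>v (Suc m)" "A *\<^sub>v v = e \<cdot>\<^sub>v v"
    using A(1) by (auto simp: eigenvalue_def eigenvector_def)
  obtain W where W: "W \<in> carrier_mat (Suc m) (Suc m)" "mat_adjoint W * W = 1\<^sub>m (Suc m)"
    and W0: "col W 0 = of_real (1 / vnorm v) \<cdot>\<^sub>v v"
    using orthonormal_completion[OF v(1,2)] by blast
  define B where "B = mat_adjoint W * A * W"
  have W': "mat_adjoint W \<in> carrier_mat (Suc m) (Suc m)" using W by simp
  have WA: "mat_adjoint W * A \<in> carrier_mat (Suc m) (Suc m)" using W' A by simp
  have B: "B \<in> carrier_mat (Suc m) (Suc m)" unfolding B_def using WA W by simp
  have "mat_adjoint B = mat_adjoint W * (mat_adjoint A * W)"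
    unfolding B_def mat_adjoint_mult[OF WA W(1)] mat_adjoint_mult[OF W' A(1)] by simp
  then have "mat_adjoint B = B"
    unfolding B_def A(2) using assoc_mult_mat[OF W' A(1) W(1)] by simp
  moreover have "col B 0 = e \<cdot>\<^sub>v unit_vec (Suc m) 0"
  proof -
    have "A *\<^sub>v col W 0 = e \<cdot>\<^sub>v col W 0"
      using A v by (simp add: W0 mult_mat_vec smult_smult_assoc mult.commute)
    then have "col B 0 = e \<cdot>\<^sub>v (mat_adjoint W *\<^sub>v col W 0)"
      using W col_dim[of W 0] carrier_vecI[of "col W 0" "Suc m"]
      by (simp add: B_def col_mult2[OF WA W(1)] assoc_mult_mat_vec[OF W' A(1)] mult_mat_vec[OF W'])
    also have "mat_adjoint W *\<^sub>v col W 0 = unit_vec (Suc m) 0"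
      using col_mult2[of "mat_adjoint W" "Suc m" "Suc m" W "Suc m" 0] W by simp
    finally show ?thesis .
  qed
  ultimately show ?thesis
    using hermitian_first_column_block[OF B] similar_mat_wit_adjoint_conj[OF A(1) W] that
    unfolding B_def by (metis mat_carrier)
qed

lemma diagonal_mat_mult_vec:
  assumes "D \<in> carrier_mat n n" "diagonal_mat D" "y \<in> carrier_vec n"
  shows "D *\<^sub>v y = vec n (\<lambda>i. D $$ (i, i) * y $ i)"
proof (rule eq_vecI)
  fix i assume "i < dim_vec (vec n (\<lambda>i. D $$ (i, i) * y $ i))"
  then have i: "i < n" by simp
  have "(D *\<^sub>v y) $ i = (\<Sum>j<n. D $$ (i, j) * y $ j)"
    using assms i by (simp add: scalar_prod_def lessThan_atLeast0)
  also have "\<dots> = (\<Sum>j<n. if j = i then D $$ (i, i) * y $ i else 0)"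
    using assms i unfolding diagonal_mat_def by (intro sum.cong) auto
  finally show "(D *\<^sub>v y) $ i = vec n (\<lambda>i. D $$ (i, i) * y $ i) $ i"
    using i by simp
qed (use assms in simp)

lemma vnorm_diagonal_mult_le:
  assumes D: "D \<in> carrier_mat n n" "diagonal_mat D" and y: "y \<in> carrier_vec n" and c: "0 \<le> c"
    and bound: "\<And>i. i < n \<Longrightarrow> y $ i \<noteq> 0 \<Longrightarrow> cmod (D $$ (i, i)) \<le> c"
  shows "vnorm (D *\<^sub>v y) \<le> c * vnorm y"
proof -
  have "vnorm (D *\<^sub>v y) ^ 2 = (\<Sum>i<n. (cmod (D $$ (i, i)) * cmod (y $ i)) ^ 2)"
    using diagonal_mat_mult_vec[OF D y] by (simp add: vnorm_square[of _ n] norm_mult)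
  also have "\<dots> \<le> (\<Sum>i<n. (c * cmod (y $ i)) ^ 2)"
  proof (rule sum_mono)
    fix i assume "i \<in> {..<n}"
    then have "cmod (D $$ (i, i)) * cmod (y $ i) \<le> c * cmod (y $ i)"
      using bound by (cases "y $ i = 0") (auto intro: mult_right_mono)
    then show "(cmod (D $$ (i, i)) * cmod (y $ i)) ^ 2 \<le> (c * cmod (y $ i)) ^ 2"
      by (simp add: power_mono)
  qed
  also have "\<dots> = (c * vnorm y) ^ 2"
    using y by (simp add: vnorm_square[of _ n] power_mult_distrib sum_distrib_left)
  finally show ?thesis
    using c by (simp add: power2_le_iff_abs_le)
qed

lemma diagonal_mat_four_block_mat:
  assumes "A \<in> carrier_mat n n" "D \<in> carrier_mat m m" "diagonal_mat A" "diagonal_mat D"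
  shows "diagonal_mat (four_block_mat A (0\<^sub>m n m) (0\<^sub>m m n) D)"
  using assms unfolding diagonal_mat_def by auto

text \<open>Taking the adjoint as inverse witness in \<^const>\<open>similar_mat_wit\<close> makes \<open>Q\<close> unitary.\<close>

theorem hermitian_unitary_diagonalization:
  fixes A :: "complex mat"
  assumes "A \<in> carrier_mat n n" "mat_adjoint A = A"
  shows "\<exists>Q D. diagonal_mat D \<and> similar_mat_wit A D Q (mat_adjoint Q)"
  using assms
proof (induction n arbitrary: A)
  case 0
  then show ?case
    using similar_mat_wit_refl[OF 0(1)]
    by (intro exI[of _ "1\<^sub>m 0"] exI[of _ A]) (auto simp: diagonal_mat_def)
next
  case (Suc m)
  obtain W e A' where A': "A' \<in> carrier_mat m m" "mat_adjoint A' = A'"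
    and sim_A: "similar_mat_wit A (four_block_mat (mat 1 1 (\<lambda>_. e)) (0\<^sub>m 1 m) (0\<^sub>m m 1) A') W (mat_adjoint W)"
    using hermitian_deflation[OF Suc.prems] by blast
  obtain Q' D' where D': "diagonal_mat D'" and sim_A': "similar_mat_wit A' D' Q' (mat_adjoint Q')"
    using Suc.IH[OF A'] by blast
  have Q': "Q' \<in> carrier_mat m m" and D'_carrier: "D' \<in> carrier_mat m m"
    using similar_mat_witD2[OF A'(1) sim_A'] by auto
  define E :: "complex mat" where "E = mat 1 1 (\<lambda>_. e)"
  define B where "B = four_block_mat (1\<^sub>m 1) (0\<^sub>m 1 m) (0\<^sub>m m 1) Q'"
  have "similar_mat_wit (four_block_mat E (0\<^sub>m 1 m) (0\<^sub>m m 1) A') (four_block_mat E (0\<^sub>m 1 m) (0\<^sub>m m 1) D')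
      B (four_block_mat (1\<^sub>m 1) (0\<^sub>m 1 m) (0\<^sub>m m 1) (mat_adjoint Q'))"
    unfolding B_def
    by (rule similar_mat_wit_four_block[OF similar_mat_wit_refl sim_A']) (use Q' A'(1) in \<open>auto simp: E_def\<close>)
  also have "four_block_mat (1\<^sub>m 1) (0\<^sub>m 1 m) (0\<^sub>m m 1) (mat_adjoint Q') = mat_adjoint B"
    unfolding B_def using mat_adjoint_four_block_diag[OF one_carrier_mat Q'] by simp
  finally have sim_block: "similar_mat_wit (four_block_mat E (0\<^sub>m 1 m) (0\<^sub>m m 1) A')
      (four_block_mat E (0\<^sub>m 1 m) (0\<^sub>m m 1) D') B (mat_adjoint B)" .
  have "W \<in> carrier_mat (Suc m) (Suc m)" "B \<in> carrier_mat (Suc m) (Suc m)"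
    using similar_mat_witD2[OF Suc.prems(1) sim_A] Q' by (auto simp: B_def)
  then have "mat_adjoint B * mat_adjoint W = mat_adjoint (W * B)"
    by (simp add: mat_adjoint_mult)
  then have "similar_mat_wit A (four_block_mat E (0\<^sub>m 1 m) (0\<^sub>m m 1) D') (W * B) (mat_adjoint (W * B))"
    using similar_mat_wit_trans[OF sim_A[folded E_def] sim_block] by simp
  moreover have "diagonal_mat (four_block_mat E (0\<^sub>m 1 m) (0\<^sub>m m 1) D')"
    using D' D'_carrier by (intro diagonal_mat_four_block_mat) (auto simp: E_def diagonal_mat_def)
  ultimately show ?case by blast
qed

lemma similar_diagonal_entry_eigenvalue:
  fixes A D :: "complex mat"
  assumes "similar_mat A D" "D \<in> carrier_mat n n" "diagonal_mat D" "i < n"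
  shows "eigenvalue A (D $$ (i, i))"
proof -
  have A: "A \<in> carrier_mat n n"
    using similar_matD[OF assms(1)] assms(2) by auto
  have "upper_triangular D"
    using assms(2,3) unfolding diagonal_mat_def upper_triangular_def by fastforce
  then have "char_poly D = (\<Prod>a\<leftarrow>diag_mat D. [:- a, 1:])"
    using char_poly_upper_triangular[OF assms(2)] by blast
  moreover have "D $$ (i, i) \<in> set (diag_mat D)"
    using assms(2,4) by (auto simp: diag_mat_def)
  ultimately have "poly (char_poly D) (D $$ (i, i)) = 0"
    by (auto simp: poly_prod_list prod_list_zero_iff)
  then show ?thesis
    using char_poly_similar[OF assms(1)] eigenvalue_root_char_poly[OF A] by simp
qed

section \<open>Orthogonal projections\<close>

locale orth_projectable =
  fixes n :: nat and S :: "complex vec set"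
  assumes subset: "S \<subseteq> carrier_vec n"
    and add_closed: "u \<in> S \<Longrightarrow> w \<in> S \<Longrightarrow> u + w \<in> S"
    and diff_closed: "u \<in> S \<Longrightarrow> w \<in> S \<Longrightarrow> u - w \<in> S"
    and orthogonal_decomposition: "x \<in> carrier_vec n \<Longrightarrow> \<exists>p\<in>S. \<forall>w\<in>S. (x - p) \<bullet>c w = 0"
begin

lemma orth_proj_eqI:
  assumes x: "x \<in> carrier_vec n" and p: "p \<in> S" and orth: "\<And>w. w \<in> S \<Longrightarrow> (x - p) \<bullet>c w = 0"
  shows "orth_proj S x = p"
  unfolding orth_proj_def
proof (rule the_equality)
  show "p \<in> S \<and> (\<forall>w\<in>S. (x - p) \<bullet>c w = 0)" using p orth by blast
next
  fix q assume q: "q \<in> S \<and> (\<forall>w\<in>S. (x - q) \<bullet>c w = 0)"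
  then have pq: "p - q \<in> S" and carrier: "p \<in> carrier_vec n" "q \<in> carrier_vec n"
    using p diff_closed subset by auto
  have "(p - q) \<bullet>c (p - q) = (x - q) \<bullet>c (p - q) - (x - p) \<bullet>c (p - q)"
    using x carrier by (simp add: cscalar_prod_eq_sum sum_subtractf[symmetric] algebra_simps)
  also have "\<dots> = 0" using q orth pq by simp
  finally have "p - q = 0\<^sub>v n"
    using carrier conjugate_square_eq_0_vec[of "p - q" n] by simp
  then have "(p - q) $ i = 0" if "i < n" for i
    using that by simp
  then have "p $ i = q $ i" if "i < n" for i
    using that carrier by simp
  then show "q = p" using carrier by (intro eq_vecI) auto
qed

lemma orth_proj_mem_orthogonal:
  assumes "x \<in> carrier_vec n"
  shows "orth_proj S x \<in> S" and "\<And>w. w \<in> S \<Longrightarrow> (x - orth_proj S x) \<bullet>c w = 0"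
proof -
  obtain p where "p \<in> S" "\<And>w. w \<in> S \<Longrightarrow> (x - p) \<bullet>c w = 0"
    using orthogonal_decomposition[OF assms] by blast
  moreover from this have "orth_proj S x = p" using orth_proj_eqI[OF assms] by blast
  ultimately show "orth_proj S x \<in> S" and "\<And>w. w \<in> S \<Longrightarrow> (x - orth_proj S x) \<bullet>c w = 0"
    by simp_all
qed

lemma orth_proj_carrier: "x \<in> carrier_vec n \<Longrightarrow> orth_proj S x \<in> carrier_vec n"
  using orth_proj_mem_orthogonal(1) subset by blast

lemma orth_proj_add:
  assumes x: "x \<in> carrier_vec n" and y: "y \<in> carrier_vec n"
  shows "orth_proj S (x + y) = orth_proj S x + orth_proj S y"
proof (rule orth_proj_eqI)
  show "orth_proj S x + orth_proj S y \<in> S"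
    using add_closed orth_proj_mem_orthogonal(1) x y by blast
  fix w assume w: "w \<in> S"
  then have "w \<in> carrier_vec n" using subset by blast
  then have "(x + y - (orth_proj S x + orth_proj S y)) \<bullet>c w
      = (x - orth_proj S x) \<bullet>c w + (y - orth_proj S y) \<bullet>c w"
    using x y orth_proj_carrier[OF x] orth_proj_carrier[OF y]
    by (simp add: cscalar_prod_eq_sum sum.distrib[symmetric] algebra_simps)
  then show "(x + y - (orth_proj S x + orth_proj S y)) \<bullet>c w = 0"
    using orth_proj_mem_orthogonal(2) x y w by simp
qed (use x y in simp)

lemma vnorm_orth_proj_pythagoras:
  assumes x: "x \<in> carrier_vec n"
  shows "vnorm x ^ 2 = vnorm (orth_proj S x) ^ 2 + vnorm (x - orth_proj S x) ^ 2"
proof -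
  have p: "orth_proj S x \<in> carrier_vec n" using orth_proj_carrier[OF x] .
  have "x = orth_proj S x + (x - orth_proj S x)"
    using x p by (intro eq_vecI) auto
  moreover have "(x - orth_proj S x) \<bullet>c orth_proj S x = 0"
    using orth_proj_mem_orthogonal[OF x] by blast
  ultimately show ?thesis
    using vnorm_add_orthogonal[OF p, of "x - orth_proj S x"] x p by simp
qed

lemma vnorm_orth_proj_le: "x \<in> carrier_vec n \<Longrightarrow> vnorm (orth_proj S x) \<le> vnorm x"
  using vnorm_orth_proj_pythagoras by (simp add: vnorm_le_square_iff)

end

section \<open>Hermitian matrices with a spectral gap below the eigenvalue 1\<close>

locale hermitian_gap =
  fixes n :: nat and A :: "complex mat" and lam :: real
  assumes carrier: "A \<in> carrier_mat n n"
    and hermitian: "mat_adjoint A = A"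
    and gap: "\<And>\<mu>. eigenvalue A \<mu> \<Longrightarrow> \<mu> \<noteq> 1 \<Longrightarrow> cmod \<mu> \<le> lam"
    and lam_nonneg: "0 \<le> lam"
begin

abbreviation "Amax \<equiv> eigenspace A 1"
abbreviation "Pmax \<equiv> orth_proj Amax"

lemma Amax_iff: "x \<in> Amax \<longleftrightarrow> x \<in> carrier_vec n \<and> A *\<^sub>v x = x"
  using carrier by (auto simp: eigenspace_def)

lemma diagonalization:
  obtains Q D where "Q \<in> carrier_mat n n" "mat_adjoint Q * Q = 1\<^sub>m n" "Q * mat_adjoint Q = 1\<^sub>m n"
    "D \<in> carrier_mat n n" "diagonal_mat D"
    "\<And>y. y \<in> carrier_vec n \<Longrightarrow> A *\<^sub>v (Q *\<^sub>v y) = Q *\<^sub>v (D *\<^sub>v y)"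
    "\<And>i. i < n \<Longrightarrow> D $$ (i, i) \<noteq> 1 \<Longrightarrow> cmod (D $$ (i, i)) \<le> lam"
proof -
  obtain Q D where D: "diagonal_mat D" and sim: "similar_mat_wit A D Q (mat_adjoint Q)"
    using hermitian_unitary_diagonalization[OF carrier hermitian] by blast
  note wit = similar_mat_witD2[OF carrier sim]
  have "A * Q = Q * D"
    using wit by (simp add: assoc_mult_mat[of _ n n _ n _ n])
  then have "A *\<^sub>v (Q *\<^sub>v y) = Q *\<^sub>v (D *\<^sub>v y)" if "y \<in> carrier_vec n" for y
    using wit that by (metis assoc_mult_mat_vec)
  moreover have "cmod (D $$ (i, i)) \<le> lam" if "i < n" "D $$ (i, i) \<noteq> 1" for i
    using gap similar_diagonal_entry_eigenvalue[of A D n i] sim wit D that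
    unfolding similar_mat_def by blast
  ultimately show ?thesis
    using that wit D by blast
qed

context
  fixes Q D :: "complex mat"
  assumes Q: "Q \<in> carrier_mat n n" "mat_adjoint Q * Q = 1\<^sub>m n" "Q * mat_adjoint Q = 1\<^sub>m n"
    and D: "D \<in> carrier_mat n n" "diagonal_mat D"
    and A_Q: "\<And>y. y \<in> carrier_vec n \<Longrightarrow> A *\<^sub>v (Q *\<^sub>v y) = Q *\<^sub>v (D *\<^sub>v y)"
begin

lemma Q_adjoint_cancel: "x \<in> carrier_vec n \<Longrightarrow> Q *\<^sub>v (mat_adjoint Q *\<^sub>v x) = x"
  using Q by (simp flip: assoc_mult_mat_vec[of Q n n "mat_adjoint Q" n])

lemma Amax_coordinate:
  assumes w: "w \<in> Amax" and i: "i < n" "D $$ (i, i) \<noteq> 1"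
  shows "(mat_adjoint Q *\<^sub>v w) $ i = 0"
proof -
  define z where "z = mat_adjoint Q *\<^sub>v w"
  have w': "w \<in> carrier_vec n" "A *\<^sub>v w = w" using w by (simp_all add: Amax_iff)
  have z: "z \<in> carrier_vec n"
    unfolding z_def using mat_adjoint_carrier[OF Q(1)] w'(1) by (rule mult_mat_vec_carrier)
  have "Q *\<^sub>v (D *\<^sub>v z) = Q *\<^sub>v z"
    using A_Q[OF z] w' by (simp add: z_def Q_adjoint_cancel)
  then have "mat_adjoint Q *\<^sub>v (Q *\<^sub>v (D *\<^sub>v z)) = mat_adjoint Q *\<^sub>v (Q *\<^sub>v z)" by simp
  then have "D *\<^sub>v z = z"
    using Q D z by (simp flip: assoc_mult_mat_vec[of "mat_adjoint Q" n n Q n])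
  have "D $$ (i, i) * z $ i = (D *\<^sub>v z) $ i"
    using diagonal_mat_mult_vec[OF D z] i by simp
  also have "\<dots> = z $ i" using \<open>D *\<^sub>v z = z\<close> by simp
  finally show ?thesis using i(2) unfolding z_def by (metis mult_cancel_right2)
qed

lemma Amax_orthogonal_decomposition:
  assumes x: "x \<in> carrier_vec n"
  shows "\<exists>p\<in>Amax. \<forall>w\<in>Amax. (x - p) \<bullet>c w = 0"
proof -
  define y where "y = mat_adjoint Q *\<^sub>v x"
  define y1 where "y1 = vec n (\<lambda>i. if D $$ (i, i) = 1 then y $ i else 0)"
  have y: "y \<in> carrier_vec n"
    unfolding y_def using mat_adjoint_carrier[OF Q(1)] x by (rule mult_mat_vec_carrier)
  have y1: "y1 \<in> carrier_vec n" by (simp add: y1_def)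
  have "D *\<^sub>v y1 = y1"
    using diagonal_mat_mult_vec[OF D y1] by (intro eq_vecI) (auto simp: y1_def)
  then have "Q *\<^sub>v y1 \<in> Amax"
    using A_Q[OF y1] Q(1) y1 by (simp add: Amax_iff)
  moreover have "(x - Q *\<^sub>v y1) \<bullet>c w = 0" if w: "w \<in> Amax" for w
  proof -
    have w': "w \<in> carrier_vec n" using w by (simp add: Amax_iff)
    have "x - Q *\<^sub>v y1 = Q *\<^sub>v (y - y1)"
      using Q_adjoint_cancel[OF x] mult_minus_distrib_mat_vec[OF Q(1) y y1] by (simp add: y_def)
    then have "(x - Q *\<^sub>v y1) \<bullet>c w = (y - y1) \<bullet>c (mat_adjoint Q *\<^sub>v w)"
      using cscalar_prod_mult_mat_vec[OF Q(1) _ w', of "y - y1"] y y1 by simp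
    also have "\<dots> = 0"
      using y y1 Q(1) w' Amax_coordinate[OF w]
      by (auto simp: cscalar_prod_eq_sum y1_def intro!: sum.neutral)
    finally show ?thesis .
  qed
  ultimately show ?thesis by blast
qed

lemma Amax_orthogonal_coordinate:
  assumes r: "r \<in> carrier_vec n" and orth: "\<And>w. w \<in> Amax \<Longrightarrow> r \<bullet>c w = 0"
    and i: "i < n" "D $$ (i, i) = 1"
  shows "(mat_adjoint Q *\<^sub>v r) $ i = 0"
proof -
  have "D *\<^sub>v unit_vec n i = unit_vec n i"
    using diagonal_mat_mult_vec[OF D unit_vec_carrier] i by (intro eq_vecI) auto
  then have "Q *\<^sub>v unit_vec n i \<in> Amax"
    using A_Q[OF unit_vec_carrier] Q(1) by (simp add: Amax_iff)
  then have "r \<bullet>c (Q *\<^sub>v unit_vec n i) = 0" by (rule orth)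
  then show ?thesis
    using cscalar_prod_mult_mat_vec[OF mat_adjoint_carrier[OF Q(1)] r unit_vec_carrier, of i]
      cscalar_prod_unit_vec[OF mult_mat_vec_carrier[OF mat_adjoint_carrier[OF Q(1)] r] i(1)]
    by simp
qed

lemma vnorm_mult_orthogonal_Amax:
  assumes gap_D: "\<And>i. i < n \<Longrightarrow> D $$ (i, i) \<noteq> 1 \<Longrightarrow> cmod (D $$ (i, i)) \<le> lam"
    and r: "r \<in> carrier_vec n" and orth: "\<And>w. w \<in> Amax \<Longrightarrow> r \<bullet>c w = 0"
  shows "vnorm (A *\<^sub>v r) \<le> lam * vnorm r"
proof -
  define y where "y = mat_adjoint Q *\<^sub>v r"
  have y: "y \<in> carrier_vec n"
    unfolding y_def using mat_adjoint_carrier[OF Q(1)] r by (rule mult_mat_vec_carrier)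
  have "vnorm (A *\<^sub>v r) = vnorm (D *\<^sub>v y)"
    using A_Q[OF y] Q_adjoint_cancel[OF r] isometry_vnorm[OF Q(1,2)] D(1) y by (simp add: y_def)
  also have "\<dots> \<le> lam * vnorm y"
  proof (rule vnorm_diagonal_mult_le[OF D y lam_nonneg])
    fix i assume "i < n" "y $ i \<noteq> 0"
    then show "cmod (D $$ (i, i)) \<le> lam"
      using gap_D Amax_orthogonal_coordinate[OF r orth] by (auto simp: y_def)
  qed
  also have "vnorm y = vnorm r"
    using isometry_vnorm[OF mat_adjoint_carrier[OF Q(1)] _ r] Q by (simp add: y_def)
  finally show ?thesis .
qed

end

sublocale orth_projectable n Amax
proof
  show "Amax \<subseteq> carrier_vec n" by (auto simp: Amax_iff)
next
  fix u w assume "u \<in> Amax" "w \<in> Amax"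
  then show "u + w \<in> Amax" and "u - w \<in> Amax"
    by (auto simp: Amax_iff mult_add_distrib_mat_vec[OF carrier] mult_minus_distrib_mat_vec[OF carrier])
next
  fix x :: "complex vec" assume "x \<in> carrier_vec n"
  obtain Q D where Q: "Q \<in> carrier_mat n n" "mat_adjoint Q * Q = 1\<^sub>m n" "Q * mat_adjoint Q = 1\<^sub>m n"
    and D: "D \<in> carrier_mat n n" "diagonal_mat D"
    and A_Q: "\<And>y. y \<in> carrier_vec n \<Longrightarrow> A *\<^sub>v (Q *\<^sub>v y) = Q *\<^sub>v (D *\<^sub>v y)"
    and "\<And>i. i < n \<Longrightarrow> D $$ (i, i) \<noteq> 1 \<Longrightarrow> cmod (D $$ (i, i)) \<le> lam"
    by (fact diagonalization)
  show "\<exists>p\<in>Amax. \<forall>w\<in>Amax. (x - p) \<bullet>c w = 0"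
    using Amax_orthogonal_decomposition[OF Q D A_Q \<open>x \<in> carrier_vec n\<close>] .
qed

lemma mult_Pmax: "x \<in> carrier_vec n \<Longrightarrow> A *\<^sub>v Pmax x = Pmax x"
  using orth_proj_mem_orthogonal(1) by (simp add: Amax_iff)

lemma Pmax_mult:
  assumes x: "x \<in> carrier_vec n"
  shows "Pmax (A *\<^sub>v x) = Pmax x"
proof (rule orth_proj_eqI)
  fix w assume w: "w \<in> Amax"
  then have w': "w \<in> carrier_vec n" "A *\<^sub>v w = w" by (simp_all add: Amax_iff)
  have "(A *\<^sub>v x - Pmax x) \<bullet>c w = x \<bullet>c (A *\<^sub>v w) - Pmax x \<bullet>c w"
    using cscalar_prod_mult_mat_vec[OF carrier x w'(1)] orth_proj_carrier[OF x] carrier x w'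
    by (simp add: hermitian cscalar_prod_diff_left[of _ n])
  also have "\<dots> = (x - Pmax x) \<bullet>c w"
    using orth_proj_carrier[OF x] x w' by (simp add: cscalar_prod_diff_left[of _ n])
  also have "\<dots> = 0" using orth_proj_mem_orthogonal(2)[OF x w] .
  finally show "(A *\<^sub>v x - Pmax x) \<bullet>c w = 0" .
qed (use x carrier orth_proj_mem_orthogonal(1) in simp_all)

lemma vnorm_mult_minus_Pmax:
  assumes x: "x \<in> carrier_vec n"
  shows "vnorm (A *\<^sub>v x - Pmax x) \<le> lam * vnorm (x - Pmax x)"
proof -
  obtain Q D where Q: "Q \<in> carrier_mat n n" "mat_adjoint Q * Q = 1\<^sub>m n" "Q * mat_adjoint Q = 1\<^sub>m n"
    and D: "D \<in> carrier_mat n n" "diagonal_mat D"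
    and A_Q: "\<And>y. y \<in> carrier_vec n \<Longrightarrow> A *\<^sub>v (Q *\<^sub>v y) = Q *\<^sub>v (D *\<^sub>v y)"
    and gap_D: "\<And>i. i < n \<Longrightarrow> D $$ (i, i) \<noteq> 1 \<Longrightarrow> cmod (D $$ (i, i)) \<le> lam"
    by (fact diagonalization)
  have p: "Pmax x \<in> carrier_vec n" using orth_proj_carrier[OF x] .
  have "A *\<^sub>v x - Pmax x = A *\<^sub>v (x - Pmax x)"
    using mult_minus_distrib_mat_vec[OF carrier x p] mult_Pmax[OF x] by simp
  then show ?thesis
    using vnorm_mult_orthogonal_Amax[OF Q D A_Q gap_D, of "x - Pmax x"] orth_proj_mem_orthogonal(2)[OF x] x p
    by simp
qed

lemma vnorm_mult_square_le_Pmax: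
  assumes x: "x \<in> carrier_vec n"
  shows "vnorm (A *\<^sub>v x) ^ 2 \<le> vnorm (Pmax x) ^ 2 + lam ^ 2 * vnorm (x - Pmax x) ^ 2"
proof -
  have "vnorm (A *\<^sub>v x - Pmax x) ^ 2 \<le> (lam * vnorm (x - Pmax x)) ^ 2"
    using vnorm_mult_minus_Pmax[OF x] by (simp add: power_mono)
  then show ?thesis
    using vnorm_orth_proj_pythagoras[of "A *\<^sub>v x"] carrier x
    by (simp add: Pmax_mult power_mult_distrib)
qed

end

section \<open>The two-step estimate\<close>

definition contraction_factor :: "real \<Rightarrow> real \<Rightarrow> real" where
  "contraction_factor lam d = 1 - (1 - lam ^ 2) ^ 2 * (1 - d) ^ 2 / 8"

lemma contraction_factor_lt_1:
  assumes "0 \<le> lam" "lam < 1" "d < 1"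
  shows "contraction_factor lam d < 1"
proof -
  have "lam ^ 2 < 1" using assms by (simp add: power_less_one_iff abs_square_less_1)
  then show ?thesis using assms by (simp add: contraction_factor_def)
qed

lemma contraction_factor_nonneg:
  assumes "0 \<le> lam" "lam \<le> 1" "0 \<le> d" "d \<le> 1"
  shows "0 \<le> contraction_factor lam d"
proof -
  have "(1 - lam ^ 2) ^ 2 \<le> 1" "(1 - d) ^ 2 \<le> 1"
    using assms by (auto intro!: power_le_one simp: power_le_one)
  then have "(1 - lam ^ 2) ^ 2 * (1 - d) ^ 2 \<le> 1" by (intro mult_le_one) auto
  then show ?thesis by (simp add: contraction_factor_def)
qed

lemma component_square_bound:
  fixes lam d a b m :: real
  assumes lam: "0 \<le> lam" "lam \<le> 1" and d: "0 \<le> d" "d \<le> 1"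
    and ab: "0 \<le> a" "0 \<le> b" and m: "0 \<le> m" "m \<le> d * a + lam * b" "m ^ 2 \<le> a ^ 2 + lam ^ 2 * b ^ 2"
  shows "m ^ 2 \<le> (1 - (1 - lam ^ 2) * ((1 - d) / 2) ^ 2) * (a ^ 2 + b ^ 2)"
proof -
  define e where "e = (1 - d) / 2"
  define s where "s = sqrt (a ^ 2 + b ^ 2)"
  have s: "s ^ 2 = a ^ 2 + b ^ 2" "a \<le> s" "b \<le> s"
    using ab by (auto simp: s_def real_le_rsqrt)
  have lam2: "0 \<le> 1 - lam ^ 2" "1 - lam ^ 2 \<le> 1" using lam by (auto simp: power_le_one)
  have "m ^ 2 \<le> (1 - (1 - lam ^ 2) * e ^ 2) * s ^ 2"
  proof (cases "b \<le> e * s")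
    case True
    have "m \<le> d * s + lam * (e * s)"
      using m(2) mult_left_mono[OF s(2) d(1)] mult_left_mono[OF True lam(1)] by linarith
    also have "\<dots> \<le> (d + e) * s"
      using lam d ab s True by (auto simp: e_def distrib_right intro!: mult_left_le_one_le)
    finally have "m ^ 2 \<le> (d + e) ^ 2 * s ^ 2"
      using m(1) by (metis power_mono power_mult_distrib)
    also have "(d + e) ^ 2 \<le> 1 - (1 - lam ^ 2) * e ^ 2"
    proof -
      have "d * d \<le> 1" using d by (simp add: mult_le_one)
      moreover have "0 \<le> lam ^ 2 * e ^ 2" by simp
      ultimately show ?thesis by (simp add: e_def power2_eq_square field_simps)
    qed
    finally show ?thesis by (simp add: mult_right_mono)
  next
    case False
    moreover have "0 \<le> e * s" using d ab s by (simp add: e_def)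
    ultimately have "(e * s) ^ 2 \<le> b ^ 2" by (simp add: power_mono)
    then have "(1 - lam ^ 2) * e ^ 2 * s ^ 2 \<le> (1 - lam ^ 2) * b ^ 2"
      using lam2 by (simp add: mult.assoc mult_left_mono flip: power_mult_distrib)
    then show ?thesis
      using m(3) s(1) by (simp add: algebra_simps)
  qed
  then show ?thesis using s(1) by (simp add: e_def)
qed

lemma contraction_factor_bound:
  fixes lam d s m N :: real
  assumes lam: "0 \<le> lam" "lam \<le> 1" and d: "0 \<le> d" "d \<le> 1" and s: "0 \<le> s" and N: "0 \<le> N"
    and m_bound: "m ^ 2 \<le> (1 - (1 - lam ^ 2) * ((1 - d) / 2) ^ 2) * s ^ 2"
    and N_bound: "N ^ 2 \<le> lam ^ 2 * s ^ 2 + (1 - lam ^ 2) * m ^ 2"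
  shows "N \<le> contraction_factor lam d * s"
proof -
  define E where "E = ((1 - d) / 2) ^ 2"
  define x where "x = (1 - lam ^ 2) ^ 2 * E"
  have g: "contraction_factor lam d = 1 - x / 2"
    by (simp add: contraction_factor_def x_def E_def power_divide)
  have "0 \<le> 1 - lam ^ 2" using lam by (simp add: power_le_one)
  then have "N ^ 2 \<le> lam ^ 2 * s ^ 2 + (1 - lam ^ 2) * ((1 - (1 - lam ^ 2) * E) * s ^ 2)"
    using N_bound mult_left_mono[OF m_bound] unfolding E_def by (meson add_left_mono order_trans)
  also have "\<dots> = (1 - x) * s ^ 2"
    by (simp add: x_def power2_eq_square algebra_simps)
  also have "\<dots> \<le> (1 - x / 2) ^ 2 * s ^ 2"
    by (intro mult_right_mono) (simp_all add: power2_eq_square algebra_simps)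
  finally have "N ^ 2 \<le> (contraction_factor lam d * s) ^ 2"
    by (simp add: g power_mult_distrib)
  moreover have "0 \<le> contraction_factor lam d * s"
    using contraction_factor_nonneg[OF lam d] s by simp
  ultimately show ?thesis by (rule power2_le_imp_le)
qed

locale hermitian_gap_unitary = hermitian_gap +
  fixes U :: "complex mat" and d :: real
  assumes U_carrier: "U \<in> carrier_mat n n"
    and U_isometry: "mat_adjoint U * U = 1\<^sub>m n"
    and lam_le_1: "lam \<le> 1"
    and d: "0 \<le> d" "d \<le> 1"
    and Pmax_U: "\<And>v. v \<in> Amax \<Longrightarrow> vnorm (Pmax (U *\<^sub>v v)) \<le> d * vnorm v"
begin

lemma vnorm_mult_square_le:
  assumes x: "x \<in> carrier_vec n"
  shows "vnorm (A *\<^sub>v x) ^ 2 \<le> vnorm x ^ 2"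
proof -
  have "lam ^ 2 * vnorm (x - Pmax x) ^ 2 \<le> vnorm (x - Pmax x) ^ 2"
    using lam_nonneg lam_le_1 by (simp add: mult_left_le_one_le power_le_one)
  then show ?thesis
    using vnorm_mult_square_le_Pmax[OF x] vnorm_orth_proj_pythagoras[OF x] by linarith
qed

lemma vnorm_UA_le:
  assumes x: "x \<in> carrier_vec n"
  shows "vnorm ((U * A) *\<^sub>v x) \<le> vnorm x"
proof -
  have "vnorm ((U * A) *\<^sub>v x) = vnorm (A *\<^sub>v x)"
    using isometry_vnorm[OF U_carrier U_isometry] carrier x
    by (simp add: assoc_mult_mat_vec[OF U_carrier carrier])
  then show ?thesis
    using vnorm_mult_square_le[OF x] by (metis vnorm_le_square_iff)
qed

lemma vnorm_Pmax_UA_le: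
  assumes x: "x \<in> carrier_vec n"
  shows "vnorm (Pmax (U *\<^sub>v (A *\<^sub>v x))) \<le> d * vnorm (Pmax x) + lam * vnorm (x - Pmax x)"
proof -
  define p r where "p = Pmax x" and "r = A *\<^sub>v x - Pmax x"
  have p: "p \<in> carrier_vec n" "p \<in> Amax"
    using orth_proj_carrier[OF x] orth_proj_mem_orthogonal(1)[OF x] by (simp_all add: p_def)
  have r: "r \<in> carrier_vec n" using carrier x p by (simp add: r_def p_def)
  have "A *\<^sub>v x = p + r"
    using carrier x p r by (intro eq_vecI) (auto simp: r_def p_def)
  then have "U *\<^sub>v (A *\<^sub>v x) = U *\<^sub>v p + U *\<^sub>v r"
    using mult_add_distrib_mat_vec[OF U_carrier p(1) r] by simp
  then have "Pmax (U *\<^sub>v (A *\<^sub>v x)) = Pmax (U *\<^sub>v p) + Pmax (U *\<^sub>v r)"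
    using U_carrier p r by (simp add: orth_proj_add)
  then have "vnorm (Pmax (U *\<^sub>v (A *\<^sub>v x))) \<le> vnorm (Pmax (U *\<^sub>v p)) + vnorm (Pmax (U *\<^sub>v r))"
    using U_carrier p r by (simp add: vnorm_triangle[OF orth_proj_carrier orth_proj_carrier])
  also have "\<dots> \<le> d * vnorm p + vnorm r"
    using Pmax_U[OF p(2)] vnorm_orth_proj_le[of "U *\<^sub>v r"] isometry_vnorm[OF U_carrier U_isometry r]
      U_carrier r by simp
  also have "\<dots> \<le> d * vnorm p + lam * vnorm (x - Pmax x)"
    using vnorm_mult_minus_Pmax[OF x] by (simp add: r_def)
  finally show ?thesis by (simp add: p_def)
qed

lemma vnorm_UA_UA_le:
  assumes x: "x \<in> carrier_vec n"
  shows "vnorm ((U * A) *\<^sub>v ((U * A) *\<^sub>v x)) \<le> contraction_factor lam d * vnorm x"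
proof -
  define v where "v = U *\<^sub>v (A *\<^sub>v x)"
  define a b m where "a = vnorm (Pmax x)" and "b = vnorm (x - Pmax x)" and "m = vnorm (Pmax v)"
  have v: "v \<in> carrier_vec n" using U_carrier carrier x by (simp add: v_def)
  have UA: "(U * A) *\<^sub>v y = U *\<^sub>v (A *\<^sub>v y)" if "y \<in> carrier_vec n" for y
    using assoc_mult_mat_vec[OF U_carrier carrier that] .
  have v_norm: "vnorm v = vnorm (A *\<^sub>v x)"
    using isometry_vnorm[OF U_carrier U_isometry] carrier x by (simp add: v_def)
  have x_norm: "vnorm x ^ 2 = a ^ 2 + b ^ 2"
    using vnorm_orth_proj_pythagoras[OF x] by (simp add: a_def b_def)
  have "m ^ 2 \<le> vnorm v ^ 2"
    using vnorm_orth_proj_le[OF v] by (simp add: m_def power_mono)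
  then have "m ^ 2 \<le> a ^ 2 + lam ^ 2 * b ^ 2"
    using vnorm_mult_square_le_Pmax[OF x] v_norm by (simp add: a_def b_def)
  then have m_bound: "m ^ 2 \<le> (1 - (1 - lam ^ 2) * ((1 - d) / 2) ^ 2) * vnorm x ^ 2"
    unfolding x_norm using component_square_bound[OF lam_nonneg lam_le_1 d] vnorm_Pmax_UA_le[OF x]
    by (simp add: a_def b_def m_def v_def)
  have "vnorm (A *\<^sub>v v) ^ 2 \<le> m ^ 2 + lam ^ 2 * (vnorm v ^ 2 - m ^ 2)"
    using vnorm_mult_square_le_Pmax[OF v] vnorm_orth_proj_pythagoras[OF v] by (simp add: m_def)
  also have "\<dots> = lam ^ 2 * vnorm v ^ 2 + (1 - lam ^ 2) * m ^ 2"
    by (simp add: algebra_simps)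
  also have "\<dots> \<le> lam ^ 2 * vnorm x ^ 2 + (1 - lam ^ 2) * m ^ 2"
    using vnorm_mult_square_le[OF x] v_norm by (simp add: mult_left_mono)
  finally have "vnorm (A *\<^sub>v v) \<le> contraction_factor lam d * vnorm x"
    by (intro contraction_factor_bound[OF lam_nonneg lam_le_1 d vnorm_nonneg vnorm_nonneg m_bound])
  moreover have "vnorm ((U * A) *\<^sub>v ((U * A) *\<^sub>v x)) = vnorm (A *\<^sub>v v)"
    using isometry_vnorm[OF U_carrier U_isometry] carrier v x
    by (simp add: UA v_def[symmetric] mult_mat_vec_carrier)
  ultimately show ?thesis by simp
qed

end

section \<open>Powers and the operator norm\<close>

lemma power_mat_Suc_mult_vec:
  assumes "T \<in> carrier_mat n n" "x \<in> carrier_vec n"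
  shows "(T ^\<^sub>m Suc k) *\<^sub>v x = (T ^\<^sub>m k) *\<^sub>v (T *\<^sub>v x)"
  using assoc_mult_mat_vec[OF pow_carrier_mat[OF assms(1)] assms] by simp

lemma vnorm_power_mat_mult_vec_le:
  fixes T :: "complex mat"
  assumes T: "T \<in> carrier_mat n n" and g: "0 \<le> g"
    and step1: "\<And>x. x \<in> carrier_vec n \<Longrightarrow> vnorm (T *\<^sub>v x) \<le> vnorm x"
    and step2: "\<And>x. x \<in> carrier_vec n \<Longrightarrow> vnorm (T *\<^sub>v (T *\<^sub>v x)) \<le> g * vnorm x"
  shows "x \<in> carrier_vec n \<Longrightarrow> vnorm ((T ^\<^sub>m k) *\<^sub>v x) \<le> g ^ (k div 2) * vnorm x"
proof (induction k arbitrary: x rule: less_induct)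
  case (less k)
  consider "k = 0" | "k = 1" | j where "k = Suc (Suc j)"
    by (metis One_nat_def not0_implies_Suc)
  then show ?case
  proof cases
    case 1
    then show ?thesis using T less.prems by simp
  next
    case 2
    then show ?thesis
      using power_mat_Suc_mult_vec[OF T less.prems, of 0] step1[OF less.prems] T less.prems by simp
  next
    case 3
    have Tx: "T *\<^sub>v x \<in> carrier_vec n" "T *\<^sub>v (T *\<^sub>v x) \<in> carrier_vec n"
      using T less.prems by simp_all
    have "(T ^\<^sub>m k) *\<^sub>v x = (T ^\<^sub>m Suc j) *\<^sub>v (T *\<^sub>v x)"
      unfolding 3 by (rule power_mat_Suc_mult_vec[OF T less.prems])
    also have "\<dots> = (T ^\<^sub>m j) *\<^sub>v (T *\<^sub>v (T *\<^sub>v x))"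
      by (rule power_mat_Suc_mult_vec[OF T Tx(1)])
    finally have "vnorm ((T ^\<^sub>m k) *\<^sub>v x) \<le> g ^ (j div 2) * vnorm (T *\<^sub>v (T *\<^sub>v x))"
      using less.IH[OF _ Tx(2), of j] 3 by simp
    also have "\<dots> \<le> g ^ (j div 2) * (g * vnorm x)"
      using step2[OF less.prems] g by (simp add: mult_left_mono)
    finally show ?thesis using 3 by (simp add: mult_ac)
  qed
qed

lemma opnorm_le:
  assumes M: "M \<in> carrier_mat n m" and b: "0 \<le> b"
    and bound: "\<And>x. x \<in> carrier_vec m \<Longrightarrow> vnorm (M *\<^sub>v x) \<le> b * vnorm x"
  shows "opnorm M \<le> b"
  unfolding opnorm_def
proof (rule cSup_least)
  have "0\<^sub>v m \<in> carrier_vec (dim_col M) \<and> vnorm (0\<^sub>v m :: complex vec) \<le> 1"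
    using M by (simp add: vnorm_def)
  then show "{vnorm (M *\<^sub>v v) |v. v \<in> carrier_vec (dim_col M) \<and> vnorm v \<le> 1} \<noteq> {}" by blast
next
  fix r assume "r \<in> {vnorm (M *\<^sub>v v) |v. v \<in> carrier_vec (dim_col M) \<and> vnorm v \<le> 1}"
  then obtain v where v: "v \<in> carrier_vec m" "vnorm v \<le> 1" and r: "r = vnorm (M *\<^sub>v v)"
    using M by auto
  have "r \<le> b * vnorm v" using bound[OF v(1)] r by simp
  also have "\<dots> \<le> b" using v(2) b by (simp add: mult_left_le)
  finally show "r \<le> b" .
qed

theorem mainTheorem9:
  fixes lam d :: real
  assumes "0 \<le> lam" "lam < 1" "0 \<le> d" "d < 1"
  shows "\<exists>g::real. g < 1 \<and>
    (\<forall>(n::nat) (U::complex mat) (A::complex mat).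
       U \<in> carrier_mat n n \<longrightarrow> A \<in> carrier_mat n n \<longrightarrow>
       unitary_mat U \<longrightarrow> hermitian_mat A \<longrightarrow>
       eigenvalue A 1 \<longrightarrow>
       (\<forall>\<mu>. eigenvalue A \<mu> \<and> \<mu> \<noteq> 1 \<longrightarrow> cmod \<mu> \<le> lam) \<longrightarrow>
       (\<forall>v \<in> eigenspace A 1. vnorm (orth_proj (eigenspace A 1) (U *\<^sub>v v)) \<le> d * vnorm v) \<longrightarrow>
       (\<forall>v \<in> carrier_vec n. vnorm (((U * A) ^\<^sub>m 2) *\<^sub>v v) \<le> g * vnorm v) \<and>
       (\<forall>k::nat. opnorm ((U * A) ^\<^sub>m k) \<le> g ^ (k div 2)))"
proof (intro exI[of _ "contraction_factor lam d"] conjI allI impI ballI)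
  show "contraction_factor lam d < 1"
    using contraction_factor_lt_1 assms by simp
  fix n U A
  assume U: "U \<in> carrier_mat n n" "unitary_mat U" and A: "A \<in> carrier_mat n n" "hermitian_mat A"
    and gap: "\<forall>\<mu>. eigenvalue A \<mu> \<and> \<mu> \<noteq> 1 \<longrightarrow> cmod \<mu> \<le> lam"
    and Pmax_U: "\<forall>v \<in> eigenspace A 1. vnorm (orth_proj (eigenspace A 1) (U *\<^sub>v v)) \<le> d * vnorm v"
  interpret hermitian_gap_unitary n A lam U d
    using U A gap Pmax_U assms by unfold_locales (auto simp: hermitian_mat_def unitary_mat_def)
  have UA: "U * A \<in> carrier_mat n n" using U A by simp
  show "vnorm (((U * A) ^\<^sub>m 2) *\<^sub>v v) \<le> contraction_factor lam d * vnorm v"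
    if "v \<in> carrier_vec n" for v
    using vnorm_UA_UA_le[OF that] power_mat_Suc_mult_vec[OF UA that, of 1]
      power_mat_Suc_mult_vec[OF UA, of _ 0] UA that
    by (simp add: numeral_2_eq_2)
  fix k
  show "opnorm ((U * A) ^\<^sub>m k) \<le> contraction_factor lam d ^ (k div 2)"
    using contraction_factor_nonneg[OF lam_nonneg lam_le_1 d]
      vnorm_power_mat_mult_vec_le[OF UA _ vnorm_UA_le vnorm_UA_UA_le]
    by (intro opnorm_le[OF pow_carrier_mat[OF UA]]) auto
qed

end
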